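(* Let $\mathcal V_1,\mathcal V_2,\mathcal V_3\in \mathsf F$, $b_i\in B(\mathcal V_i)$, $i=1,2,3$. Then (i) for any $\Lambda\in \mathsf F(\mathcal V_1,\mathcal V_2)$, $\delta_{\mathsf F}(\Lambda(b_1)\|b_3)\ge \delta_{\mathsf F}(b_1\|b_3)$; (ii) for any $\Theta\in \mathsf F(\mathcal V_2,\mathcal V_3)$, $\delta_{\mathsf F}(b_1\|\Theta(b_2))\le \delta_{\mathsf F}(b_1\|b_2)$.
   Context: Let $\mathsf{BS}$ be the category whose objects are finite dimensional real vector spaces $\mathcal V$ endowed with a fixed proper (closed, convex, pointed, generating) cone $\mathcal V^+\subset\mathcal V$ and a base section $B(\mathcal V)$, i.e. a convex subset $B(\mathcal V)\subset\mathcal V^+$ which is a base of the cone $\mathcal V^+\cap\mathrm{span}(B(\mathcal V))$ and satisfies $B(\mathcal V)\cap\mathrm{int}(\mathcal V^+)\neq\emptyset$. Morphisms $\Lambda:\mathcal V\to\mathcal W$ in $\mathsf{BS}$ are linear maps with $\Lambda(\mathcal V^+)\subseteq\mathcal W^+$ and $\Lambda(B(\mathcal V))\subseteq B(\mathcal W)$. The dual object $\mathcal V^*$ carries the dual cone $\mathcal V^{*+}=\{\varphi\in\mathcal V^*:\ \langle\varphi,c\rangle\ge0\ \forall c\in\mathcal V^+\}$ and the dual base section $B(\mathcal V^* )=\{\varphi\in\mathcal V^{*+}:\ \langle\varphi,b\rangle=1\ \forall b\in B(\mathcal V)\}$. With $[-B(\mathcal V^* ),B(\mathcal V^* )]=\{x\in\mathcal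 V^*:\ \exists b\in B(\mathcal V^* ),\ -b\le x\le b\}$, the norm on $\mathcal V$ is $\|x\|_{\mathcal V}=\max_{\psi\in[-B(\mathcal V^* ),B(\mathcal V^* )]}\langle\psi,x\rangle$. Let $\mathsf F$ be a subcategory of $\mathsf{BS}$ such that for any objects $\mathcal V,\mathcal W\in\mathsf F$ the set $\mathsf F(\mathcal V,\mathcal W)$ of morphisms $\mathcal V\to\mathcal W$ in $\mathsf F$ is convex. For objects $\mathcal V,\mathcal W\in\mathsf F$ and $b\in B(\mathcal V)$, $b'\in B(\mathcal W)$, define $\delta_{\mathsf F}(b\|b')=\inf_{\Lambda\in\mathsf F(\mathcal V,\mathcal W)}\|\Lambda(b)-b'\|_{\mathcal W}$. *)

theory Defs
  imports "HOL-Analysis.Analysis"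
begin

text \<open>An object of BS is represented by a finite-dimensional real vector space
(a type of class euclidean_space) together with a cone C and a base section B.
The dual space is represented by the linear functionals on it.\<close>

definition proper_cone :: "'a::euclidean_space set \<Rightarrow> bool" where
  "proper_cone C \<longleftrightarrow> closed C \<and> convex_cone C \<and> C \<inter> uminus ` C = {0}
     \<and> {x - y | x y. x \<in> C \<and> y \<in> C} = UNIV"

definition is_base_of :: "'a::euclidean_space set \<Rightarrow> 'a set \<Rightarrow> bool" where
  "is_base_of B K \<longleftrightarrow> B \<subseteq> K \<and> convex B \<and>
     (\<forall>x \<in> K - {0}. \<exists>!p. fst p > 0 \<and> snd p \<in> B \<and> x = fst p *\<^sub>R snd p)"

definition base_section :: "'a::euclidean_space set \<Rightarrow> 'a set \<Rightarrow> bool" where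
  "base_section C B \<longleftrightarrow> convex B \<and> B \<subseteq> C \<and> is_base_of B (C \<inter> span B)
     \<and> B \<inter> interior C \<noteq> {}"

definition bs_object :: "'a::euclidean_space set \<Rightarrow> 'a set \<Rightarrow> bool" where
  "bs_object C B \<longleftrightarrow> proper_cone C \<and> base_section C B"

definition bs_morphism :: "'a::euclidean_space set \<Rightarrow> 'a set \<Rightarrow> 'b::euclidean_space set
     \<Rightarrow> 'b set \<Rightarrow> ('a \<Rightarrow> 'b) \<Rightarrow> bool" where
  "bs_morphism C B C' B' L \<longleftrightarrow> linear L \<and> L ` C \<subseteq> C' \<and> L ` B \<subseteq> B'"

definition dual_cone :: "'a::euclidean_space set \<Rightarrow> ('a \<Rightarrow> real) set" where
  "dual_cone C = {\<phi>. linear \<phi> \<and> (\<forall>c \<in> C. \<phi> c \<ge> 0)}"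

definition dual_base :: "'a::euclidean_space set \<Rightarrow> 'a set \<Rightarrow> ('a \<Rightarrow> real) set" where
  "dual_base C B = {\<phi> \<in> dual_cone C. \<forall>b \<in> B. \<phi> b = 1}"

text \<open>The order interval [-B(V*), B(V*)] in the dual, w.r.t. the dual cone.\<close>
definition dual_interval :: "'a::euclidean_space set \<Rightarrow> 'a set \<Rightarrow> ('a \<Rightarrow> real) set" where
  "dual_interval C B = {x. linear x \<and> (\<exists>b \<in> dual_base C B.
       (\<lambda>v. b v - x v) \<in> dual_cone C \<and> (\<lambda>v. x v + b v) \<in> dual_cone C)}"

definition bs_norm :: "'a::euclidean_space set \<Rightarrow> 'a set \<Rightarrow> 'a \<Rightarrow> real" where
  "bs_norm C B x = (SUP \<psi> \<in> dual_interval C B. \<psi> x)"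

text \<open>delta_F(b||b') for a hom-set F = F(V,W); W has cone C' and base section B'.
The infimum is taken in the extended reals (infimum over an empty hom-set is +infinity).\<close>
definition delta_F :: "('a \<Rightarrow> 'b) set \<Rightarrow> 'b::euclidean_space set \<Rightarrow> 'b set \<Rightarrow> 'a \<Rightarrow> 'b \<Rightarrow> ereal" where
  "delta_F F C' B' b b' = (INF L \<in> F. ereal (bs_norm C' B' (L b - b')))"

definition convex_maps :: "('a \<Rightarrow> 'b::real_vector) set \<Rightarrow> bool" where
  "convex_maps F \<longleftrightarrow> (\<forall>L \<in> F. \<forall>M \<in> F. \<forall>t::real. 0 \<le> t \<and> t \<le> 1 \<longrightarrow>
      (\<lambda>v. t *\<^sub>R L v + (1 - t) *\<^sub>R M v) \<in> F)"

end

theory Submission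
  imports Defs
begin

text \<open>The base norm is the support function of the dual order interval
  \<open>[-B(V*), B(V*)]\<close>, and a morphism \<open>\<Theta>\<close> pulls this interval back along \<open>\<psi> \<mapsto> \<psi> \<circ> \<Theta>\<close>;
  hence morphisms are contractions for the base norm. Both inequalities follow, since composing
  with a morphism maps one hom-set into the other. The real work is to see that the base norm
  is a supremum of a nonempty bounded set: the cone spanned by differences of points of \<open>B\<close>
  misses the interior of the cone (uniqueness of the base representation), so a separating
  hyperplane gives a functional that is nonnegative on the cone and constant on \<open>B\<close>.\<close>

lemma proper_cone_zero_notin_interior:
  assumes "proper_cone C"
  shows "0 \<notin> interior C"
proof
  assume "0 \<in> interior C"
  then obtain e where "e > 0" and ball: "ball 0 e \<subseteq> C"
    by (meson mem_interior)
  obtain i :: 'a where i: "i \<in> Basis"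
    using nonempty_Basis by blast
  define x where "x = (e / 2) *\<^sub>R i"
  have norm_x: "norm x = e / 2"
    using \<open>e > 0\<close> i by (simp add: x_def)
  then have "x \<in> C" "-x \<in> C"
    using \<open>e > 0\<close> ball by (auto simp: subset_iff dist_norm)
  then have "x \<in> C \<inter> uminus ` C"
    by (metis IntI image_eqI minus_minus)
  then have "x = 0"
    using assms unfolding proper_cone_def by blast
  with norm_x \<open>e > 0\<close> show False
    by simp
qed

lemma bs_object_base_scale_unique:
  assumes obj: "bs_object C B" and "p \<in> B" "q \<in> B" "p \<noteq> 0" "0 < s" "0 < t"
    and eq: "s *\<^sub>R p = t *\<^sub>R q"
  shows "s = t"
proof -
  have cone: "convex_cone C" and "B \<subseteq> C" and base: "is_base_of B (C \<inter> span B)"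
    using obj unfolding bs_object_def proper_cone_def base_section_def by auto
  have "s *\<^sub>R p \<in> C \<inter> span B"
    using \<open>p \<in> B\<close> \<open>B \<subseteq> C\<close> \<open>0 < s\<close> cone
    by (auto simp: convex_cone_def conic_def span_base span_scale)
  moreover have "s *\<^sub>R p \<noteq> 0"
    using \<open>p \<noteq> 0\<close> \<open>0 < s\<close> by simp
  ultimately have "\<exists>!pr. 0 < fst pr \<and> snd pr \<in> B \<and> s *\<^sub>R p = fst pr *\<^sub>R snd pr"
    using base unfolding is_base_of_def by blast
  then have "(s, p) = (t, q)"
    using assms(2-6) eq by (metis fst_conv snd_conv)
  then show ?thesis
    by simp
qed

lemma bs_object_zero_notin_base:
  assumes obj: "bs_object C B"
  shows "0 \<notin> B"
proof
  assume "0 \<in> B"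
  obtain b where b: "b \<in> B" "b \<in> interior C"
    using obj unfolding bs_object_def base_section_def by blast
  then have "b \<noteq> 0"
    using obj proper_cone_zero_notin_interior unfolding bs_object_def by metis
  have "convex B"
    using obj unfolding bs_object_def base_section_def by blast
  then have "(1 / 2) *\<^sub>R b + (1 / 2) *\<^sub>R 0 \<in> B"
    using convexD[of B b 0 "1 / 2" "1 / 2"] b(1) \<open>0 \<in> B\<close> by simp
  then have "(1 / 2) *\<^sub>R b \<in> B"
    by simp
  then have "(1 :: real) = 2"
    by (rule bs_object_base_scale_unique[OF obj b(1) _ \<open>b \<noteq> 0\<close>]) auto
  then show False
    by simp
qed

lemma bs_object_base_differences_disjoint_interior:
  assumes obj: "bs_object C B"
  shows "cone hull {p - q | p q. p \<in> B \<and> q \<in> B} \<inter> interior C = {}"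
proof (rule ccontr)
  assume "cone hull {p - q | p q. p \<in> B \<and> q \<in> B} \<inter> interior C \<noteq> {}"
  then obtain \<alpha> d where "0 \<le> \<alpha>" "d \<in> {p - q | p q. p \<in> B \<and> q \<in> B}"
    and x: "\<alpha> *\<^sub>R d \<in> interior C"
    unfolding cone_hull_expl by blast
  then obtain p q where "p \<in> B" "q \<in> B" "d = p - q"
    by blast
  have cvx: "convex B" and base: "is_base_of B (C \<inter> span B)"
    using obj unfolding bs_object_def base_section_def by auto
  have "\<alpha> *\<^sub>R d \<noteq> 0"
    using x obj proper_cone_zero_notin_interior unfolding bs_object_def by metis
  then have "0 < \<alpha>"
    using \<open>0 \<le> \<alpha>\<close> by (cases "\<alpha> = 0") auto
  have "\<alpha> *\<^sub>R d \<in> span B"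
    unfolding \<open>d = p - q\<close> using \<open>p \<in> B\<close> \<open>q \<in> B\<close> by (intro span_scale span_diff span_base)
  then have "\<alpha> *\<^sub>R d \<in> C \<inter> span B - {0}"
    using x interior_subset \<open>\<alpha> *\<^sub>R d \<noteq> 0\<close> by blast
  then obtain t r where "0 < t" "r \<in> B" and tr: "\<alpha> *\<^sub>R d = t *\<^sub>R r"
    using base unfolding is_base_of_def by (metis (no_types, lifting) ex1_implies_ex)
  define r' where "r' = (t / (t + \<alpha>)) *\<^sub>R r + (\<alpha> / (t + \<alpha>)) *\<^sub>R q"
  have "r' \<in> B"
    unfolding r'_def using \<open>0 < t\<close> \<open>0 < \<alpha>\<close>
    by (intro convexD[OF cvx \<open>r \<in> B\<close> \<open>q \<in> B\<close>]) (auto simp: add_divide_distrib[symmetric])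
  have "\<alpha> *\<^sub>R p = \<alpha> *\<^sub>R d + \<alpha> *\<^sub>R q"
    by (simp add: \<open>d = p - q\<close> algebra_simps)
  also have "\<dots> = (t + \<alpha>) *\<^sub>R r'"
    using tr \<open>0 < t\<close> \<open>0 < \<alpha>\<close> by (simp add: r'_def scaleR_add_right)
  finally have "\<alpha> *\<^sub>R p = (t + \<alpha>) *\<^sub>R r'" .
  moreover have "p \<noteq> 0"
    using bs_object_zero_notin_base[OF obj] \<open>p \<in> B\<close> by blast
  ultimately have "\<alpha> = t + \<alpha>"
    using \<open>0 < t\<close> \<open>0 < \<alpha>\<close>
    by (intro bs_object_base_scale_unique[OF obj \<open>p \<in> B\<close> \<open>r' \<in> B\<close>]) auto
  with \<open>0 < t\<close> show False
    by simp
qed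

lemma cone_inner_bounded_above_nonpos:
  fixes a :: "'a::real_inner"
  assumes "cone K" "x \<in> K" and bound: "\<forall>y\<in>K. a \<bullet> y \<le> c"
  shows "a \<bullet> x \<le> 0"
proof (rule ccontr)
  assume "\<not> a \<bullet> x \<le> 0"
  define s where "s = (\<bar>c\<bar> + 1) / (a \<bullet> x)"
  have "0 \<le> s"
    using \<open>\<not> a \<bullet> x \<le> 0\<close> by (simp add: s_def)
  then have "a \<bullet> (s *\<^sub>R x) \<le> c"
    using assms mem_cone bound by blast
  moreover have "a \<bullet> (s *\<^sub>R x) = \<bar>c\<bar> + 1"
    using \<open>\<not> a \<bullet> x \<le> 0\<close> by (simp add: s_def)
  ultimately show False
    by simp
qed

lemma bs_object_dual_base_nonempty:
  assumes obj: "bs_object C B"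
  shows "dual_base C B \<noteq> {}"
proof -
  let ?K = "cone hull {p - q | p q. p \<in> B \<and> q \<in> B}"
  have cvx: "convex B" "convex C"
    using obj unfolding bs_object_def base_section_def proper_cone_def convex_cone_def by auto
  obtain b where b: "b \<in> B" "b \<in> interior C"
    using obj unfolding bs_object_def base_section_def by blast
  have "0 *\<^sub>R (b - b) \<in> ?K"
    unfolding cone_hull_expl using b(1) by blast
  then have "0 \<in> ?K"
    by simp
  have "{p - q | p q. p \<in> B \<and> q \<in> B} = (\<Union>p\<in>B. \<Union>q\<in>B. {p - q})"
    by blast
  then have "convex ?K"
    using convex_cone_hull convex_differences[OF cvx(1) cvx(1)] by simp
  moreover have "?K \<noteq> {}" "interior C \<noteq> {}"
    using \<open>0 \<in> ?K\<close> b(2) by blast+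
  ultimately obtain a c where "a \<noteq> 0" and K_le: "\<forall>x\<in>?K. a \<bullet> x \<le> c"
    and int_ge: "\<forall>x\<in>interior C. c \<le> a \<bullet> x"
    using separating_hyperplane_sets[OF _ convex_interior[OF cvx(2)] _ _
        bs_object_base_differences_disjoint_interior[OF obj]] by blast
  have "0 \<le> c"
    using K_le \<open>0 \<in> ?K\<close> by fastforce
  have "interior C \<subseteq> {x. 0 \<le> a \<bullet> x}"
    using int_ge \<open>0 \<le> c\<close> by fastforce
  then have "closure (interior C) \<subseteq> {x. 0 \<le> a \<bullet> x}"
    by (rule closure_minimal) (rule closed_halfspace_ge)
  moreover have "closure (interior C) = closure C"
    using convex_closure_interior[OF cvx(2)] b(2) by blast
  ultimately have C_ge: "C \<subseteq> {x. 0 \<le> a \<bullet> x}"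
    using closure_subset[of C] by blast
  have "b \<in> interior {x. 0 \<le> a \<bullet> x}"
    using interior_mono[OF C_ge] b(2) by blast
  then have "0 < a \<bullet> b"
    using \<open>a \<noteq> 0\<close> by simp
  have diff: "a \<bullet> (p - q) \<le> 0" if "p \<in> B" "q \<in> B" for p q
  proof (rule cone_inner_bounded_above_nonpos[OF cone_cone_hull _ K_le])
    show "p - q \<in> ?K"
      using that by (intro hull_inc) blast
  qed
  have "(\<lambda>x. (a \<bullet> x) / (a \<bullet> b)) \<in> dual_base C B"
    unfolding dual_base_def dual_cone_def
  proof (intro CollectI conjI ballI)
    show "linear (\<lambda>x. (a \<bullet> x) / (a \<bullet> b))"
      by (simp add: linear_iff inner_add_right add_divide_distrib)
  next
    show "0 \<le> (a \<bullet> x) / (a \<bullet> b)" if "x \<in> C" for x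
      using that C_ge \<open>0 < a \<bullet> b\<close> by auto
  next
    show "(a \<bullet> p) / (a \<bullet> b) = 1" if "p \<in> B" for p
      using diff[OF that b(1)] diff[OF b(1) that] \<open>0 < a \<bullet> b\<close> by (simp add: inner_diff_right)
  qed
  then show ?thesis
    by blast
qed

lemma bs_object_zero_mem_dual_interval:
  assumes "bs_object C B"
  shows "(\<lambda>_. 0) \<in> dual_interval C B"
proof -
  obtain \<beta> where "\<beta> \<in> dual_base C B"
    using bs_object_dual_base_nonempty[OF assms] by blast
  then show ?thesis
    unfolding dual_interval_def dual_base_def by (auto intro: linear_zero)
qed

lemma bs_object_dual_base_bounded:
  assumes obj: "bs_object C B" and "c \<in> C"
  obtains K where "\<And>\<beta>. \<beta> \<in> dual_base C B \<Longrightarrow> \<beta> c \<le> K"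
proof -
  obtain b where b: "b \<in> B" "b \<in> interior C"
    using obj unfolding bs_object_def base_section_def by blast
  then obtain e where "0 < e" and ball: "ball b e \<subseteq> C"
    by (meson mem_interior)
  have "0 < norm c + 1"
    using norm_ge_zero[of c] by linarith
  define \<epsilon> where "\<epsilon> = e / (norm c + 1)"
  have "0 < \<epsilon>"
    using \<open>0 < e\<close> \<open>0 < norm c + 1\<close> by (simp add: \<epsilon>_def)
  then have "\<epsilon> * norm c < \<epsilon> * (norm c + 1)"
    by simp
  also have "\<dots> = e"
    using \<open>0 < norm c + 1\<close> by (simp add: \<epsilon>_def)
  finally have "b - \<epsilon> *\<^sub>R c \<in> C"
    using ball \<open>0 < \<epsilon>\<close> by (auto simp: dist_norm)
  have "\<beta> c \<le> 1 / \<epsilon>" if "\<beta> \<in> dual_base C B" for \<beta>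
  proof -
    have "linear \<beta>" "\<beta> b = 1" "0 \<le> \<beta> (b - \<epsilon> *\<^sub>R c)"
      using that b(1) \<open>b - \<epsilon> *\<^sub>R c \<in> C\<close> unfolding dual_base_def dual_cone_def by auto
    then have "0 \<le> 1 - \<epsilon> * \<beta> c"
      by (simp add: linear_diff linear_cmul)
    then show ?thesis
      using \<open>0 < \<epsilon>\<close> by (simp add: field_simps)
  qed
  then show ?thesis
    using that by blast
qed

lemma bs_object_bdd_above_dual_interval:
  assumes obj: "bs_object C B"
  shows "bdd_above ((\<lambda>\<psi>. \<psi> x) ` dual_interval C B)"
proof -
  obtain c d where "x = c - d" "c \<in> C" "d \<in> C"
    using obj unfolding bs_object_def proper_cone_def by blast
  obtain K1 where K1: "\<And>\<beta>. \<beta> \<in> dual_base C B \<Longrightarrow> \<beta> c \<le> K1"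
    using bs_object_dual_base_bounded[OF obj \<open>c \<in> C\<close>] by blast
  obtain K2 where K2: "\<And>\<beta>. \<beta> \<in> dual_base C B \<Longrightarrow> \<beta> d \<le> K2"
    using bs_object_dual_base_bounded[OF obj \<open>d \<in> C\<close>] by blast
  have "\<psi> x \<le> K1 + K2" if \<psi>: "\<psi> \<in> dual_interval C B" for \<psi>
  proof -
    obtain \<beta> where "linear \<psi>" "\<beta> \<in> dual_base C B"
      and "(\<lambda>v. \<beta> v - \<psi> v) \<in> dual_cone C" "(\<lambda>v. \<psi> v + \<beta> v) \<in> dual_cone C"
      using \<psi> unfolding dual_interval_def by blast
    then have "\<psi> c \<le> \<beta> c" "- \<psi> d \<le> \<beta> d" "\<psi> x = \<psi> c - \<psi> d"
      using \<open>x = c - d\<close> \<open>c \<in> C\<close> \<open>d \<in> C\<close> by (auto simp: dual_cone_def linear_diff)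
    then show ?thesis
      using K1 K2 \<open>\<beta> \<in> dual_base C B\<close> by fastforce
  qed
  then show ?thesis
    by (rule bdd_aboveI2)
qed

lemma dual_cone_comp:
  assumes "linear \<Theta>" "\<Theta> ` C \<subseteq> C'" "\<phi> \<in> dual_cone C'"
  shows "\<phi> \<circ> \<Theta> \<in> dual_cone C"
  using assms by (auto simp: dual_cone_def linear_compose)

lemma dual_base_comp:
  assumes "bs_morphism C B C' B' \<Theta>" "\<beta> \<in> dual_base C' B'"
  shows "\<beta> \<circ> \<Theta> \<in> dual_base C B"
  using assms dual_cone_comp by (fastforce simp: dual_base_def bs_morphism_def)

lemma dual_interval_comp:
  assumes mor: "bs_morphism C B C' B' \<Theta>" and "\<psi> \<in> dual_interval C' B'"
  shows "\<psi> \<circ> \<Theta> \<in> dual_interval C B"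
proof -
  obtain \<beta> where "linear \<psi>" "\<beta> \<in> dual_base C' B'"
    and lower: "(\<lambda>v. \<beta> v - \<psi> v) \<in> dual_cone C'" and upper: "(\<lambda>v. \<psi> v + \<beta> v) \<in> dual_cone C'"
    using assms(2) unfolding dual_interval_def by blast
  have "linear \<Theta>" "\<Theta> ` C \<subseteq> C'"
    using mor unfolding bs_morphism_def by auto
  then have "(\<lambda>v. \<beta> v - \<psi> v) \<circ> \<Theta> \<in> dual_cone C" "(\<lambda>v. \<psi> v + \<beta> v) \<circ> \<Theta> \<in> dual_cone C"
    using lower upper by (blast intro: dual_cone_comp)+
  then show ?thesis
    using dual_base_comp[OF mor \<open>\<beta> \<in> dual_base C' B'\<close>] linear_compose[OF \<open>linear \<Theta>\<close> \<open>linear \<psi>\<close>]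
    unfolding dual_interval_def by (auto simp: o_def)
qed

lemma bs_norm_morphism_le:
  assumes obj: "bs_object C B" and obj': "bs_object C' B'"
    and mor: "bs_morphism C B C' B' \<Theta>"
  shows "bs_norm C' B' (\<Theta> x) \<le> bs_norm C B x"
  unfolding bs_norm_def
proof (rule cSUP_least)
  show "dual_interval C' B' \<noteq> {}"
    using bs_object_zero_mem_dual_interval[OF obj'] by blast
next
  fix \<psi> assume "\<psi> \<in> dual_interval C' B'"
  then have "(\<psi> \<circ> \<Theta>) x \<le> (SUP \<phi> \<in> dual_interval C B. \<phi> x)"
    by (intro cSUP_upper dual_interval_comp[OF mor] bs_object_bdd_above_dual_interval[OF obj])
  then show "\<psi> (\<Theta> x) \<le> (SUP \<phi> \<in> dual_interval C B. \<phi> x)"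
    by simp
qed

lemma delta_F_le_delta_F_precomp:
  assumes "\<forall>M \<in> G. M \<circ> \<Lambda> \<in> F"
  shows "delta_F F C B b b' \<le> delta_F G C B (\<Lambda> b) b'"
  unfolding delta_F_def
proof (rule INF_greatest)
  fix M assume "M \<in> G"
  then have "(INF L \<in> F. ereal (bs_norm C B (L b - b'))) \<le> ereal (bs_norm C B ((M \<circ> \<Lambda>) b - b'))"
    using assms by (intro INF_lower) blast
  then show "(INF L \<in> F. ereal (bs_norm C B (L b - b'))) \<le> ereal (bs_norm C B (M (\<Lambda> b) - b'))"
    by simp
qed

lemma delta_F_postcomp_le:
  assumes comp: "\<forall>L \<in> F. \<Theta> \<circ> L \<in> G" and "linear \<Theta>"
    and contr: "\<And>x. bs_norm C' B' (\<Theta> x) \<le> bs_norm C B x"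
  shows "delta_F G C' B' b (\<Theta> b') \<le> delta_F F C B b b'"
  unfolding delta_F_def
proof (rule INF_greatest)
  fix L assume "L \<in> F"
  then have "(INF M \<in> G. ereal (bs_norm C' B' (M b - \<Theta> b')))
      \<le> ereal (bs_norm C' B' ((\<Theta> \<circ> L) b - \<Theta> b'))"
    using comp by (intro INF_lower) blast
  also have "(\<Theta> \<circ> L) b - \<Theta> b' = \<Theta> (L b - b')"
    using \<open>linear \<Theta>\<close> by (simp add: linear_diff)
  also have "ereal (bs_norm C' B' (\<Theta> (L b - b'))) \<le> ereal (bs_norm C B (L b - b'))"
    using contr by simp
  finally show "(INF M \<in> G. ereal (bs_norm C' B' (M b - \<Theta> b'))) \<le> ereal (bs_norm C B (L b - b'))" .
qed

theorem proposition3: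
  fixes C1 B1 :: "'a::euclidean_space set"
    and C2 B2 :: "'b::euclidean_space set"
    and C3 B3 :: "'c::euclidean_space set"
    and F12 :: "('a \<Rightarrow> 'b) set" and F13 :: "('a \<Rightarrow> 'c) set" and F23 :: "('b \<Rightarrow> 'c) set"
    and b1 :: 'a and b2 :: 'b and b3 :: 'c
  assumes obj1: "bs_object C1 B1" and obj2: "bs_object C2 B2" and obj3: "bs_object C3 B3"
    and mor12: "\<forall>L \<in> F12. bs_morphism C1 B1 C2 B2 L"
    and mor13: "\<forall>L \<in> F13. bs_morphism C1 B1 C3 B3 L"
    and mor23: "\<forall>L \<in> F23. bs_morphism C2 B2 C3 B3 L"
    and comp: "\<forall>L \<in> F12. \<forall>M \<in> F23. M \<circ> L \<in> F13"
    and cvx12: "convex_maps F12" and cvx13: "convex_maps F13" and cvx23: "convex_maps F23"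
    and b1: "b1 \<in> B1" and b2: "b2 \<in> B2" and b3: "b3 \<in> B3"
  shows "(\<forall>\<Lambda> \<in> F12. delta_F F23 C3 B3 (\<Lambda> b1) b3 \<ge> delta_F F13 C3 B3 b1 b3)
       \<and> (\<forall>\<Theta> \<in> F23. delta_F F13 C3 B3 b1 (\<Theta> b2) \<le> delta_F F12 C2 B2 b1 b2)"
proof (intro conjI ballI)
  fix \<Lambda> assume "\<Lambda> \<in> F12"
  then show "delta_F F13 C3 B3 b1 b3 \<le> delta_F F23 C3 B3 (\<Lambda> b1) b3"
    using comp by (intro delta_F_le_delta_F_precomp) blast
next
  fix \<Theta> assume "\<Theta> \<in> F23"
  then have mor: "bs_morphism C2 B2 C3 B3 \<Theta>"
    using mor23 by blast
  then show "delta_F F13 C3 B3 b1 (\<Theta> b2) \<le> delta_F F12 C2 B2 b1 b2"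
    using comp \<open>\<Theta> \<in> F23\<close> bs_norm_morphism_le[OF obj2 obj3 mor]
    by (intro delta_F_postcomp_le) (auto simp: bs_morphism_def)
qed

end
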